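(* Let $(X,Y)$ be a bivariate random vector that is reverse exchangeable, i.e. $(X,Y)$ and $(-Y,-X)$ have the same joint distribution. Then $$|\max(X,Y)|\overset{d}{=}|\min(X,Y)|\overset{d}{=}|X|\overset{d}{=}|Y|.$$
   Context: $\overset{d}{=}$ denotes equality in distribution. *)

theory Defs
  imports "HOL-Probability.Probability"
begin

end

theory Submission
  imports Defs
begin

text \<open>Reverse exchangeability transports every statistic f(X,Y) to f(-Y,-X). With
  f = |max| this gives |max(X,Y)| \<sim> |min(X,Y)|, and with f = |fst| it gives |X| \<sim> |Y|.
  Finally, for every \<omega> the pair (|max|, |min|) is a permutation of (|X|, |Y|), so the two
  laws of each pair add up to the same measure; since each pair consists of two equal laws,
  |min(X,Y)| \<sim> |X| follows.\<close>

lemma distr_comp_eq: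
  assumes "distr M N f = distr M N g"
    and "f \<in> measurable M N" "g \<in> measurable M N" "h \<in> measurable N L"
  shows "distr M L (\<lambda>x. h (f x)) = distr M L (\<lambda>x. h (g x))"
proof -
  have "distr M L (\<lambda>x. h (f x)) = distr (distr M N f) L h"
    using distr_distr[OF assms(4,2)] by (simp add: comp_def)
  also have "\<dots> = distr (distr M N g) L h"
    using assms(1) by simp
  also have "\<dots> = distr M L (\<lambda>x. h (g x))"
    using distr_distr[OF assms(4,3)] by (simp add: comp_def)
  finally show ?thesis .
qed

lemma emeasure_vimage_add_eq_of_permuted:
  assumes meas: "a \<in> measurable M N" "b \<in> measurable M N" "c \<in> measurable M N" "d \<in> measurable M N"
    and perm: "\<And>x. x \<in> space M \<Longrightarrow> (a x = c x \<and> b x = d x) \<or> (a x = d x \<and> b x = c x)"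
    and A: "A \<in> sets N"
  shows "emeasure M (a -` A \<inter> space M) + emeasure M (b -` A \<inter> space M)
       = emeasure M (c -` A \<inter> space M) + emeasure M (d -` A \<inter> space M)"
proof -
  have vimage: "emeasure M (f -` A \<inter> space M) = (\<integral>\<^sup>+ x. indicator A (f x) \<partial>M)"
    if "f \<in> measurable M N" for f
  proof -
    have "emeasure M (f -` A \<inter> space M) = (\<integral>\<^sup>+ x. indicator (f -` A \<inter> space M) x \<partial>M)"
      using measurable_sets[OF that A] by simp
    also have "\<dots> = (\<integral>\<^sup>+ x. indicator A (f x) \<partial>M)"
      by (intro nn_integral_cong) (simp split: split_indicator)
    finally show ?thesis .
  qed
  have "emeasure M (a -` A \<inter> space M) + emeasure M (b -` A \<inter> space M)
      = (\<integral>\<^sup>+ x. indicator A (a x) + indicator A (b x) \<partial>M)"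
    using meas A by (simp add: vimage nn_integral_add)
  also have "\<dots> = (\<integral>\<^sup>+ x. indicator A (c x) + indicator A (d x) \<partial>M)"
    using perm by (intro nn_integral_cong) (metis add.commute)
  also have "\<dots> = emeasure M (c -` A \<inter> space M) + emeasure M (d -` A \<inter> space M)"
    using meas A by (simp add: vimage nn_integral_add)
  finally show ?thesis .
qed

lemma distr_eq_of_permuted:
  assumes meas: "a \<in> measurable M N" "b \<in> measurable M N" "c \<in> measurable M N" "d \<in> measurable M N"
    and perm: "\<And>x. x \<in> space M \<Longrightarrow> (a x = c x \<and> b x = d x) \<or> (a x = d x \<and> b x = c x)"
    and ab: "distr M N a = distr M N b" and cd: "distr M N c = distr M N d"
  shows "distr M N a = distr M N c"
proof (rule measure_eqI)
  fix A assume "A \<in> sets (distr M N a)"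
  then have A: "A \<in> sets N" by simp
  have "emeasure (distr M N a) A + emeasure (distr M N a) A
      = emeasure (distr M N c) A + emeasure (distr M N c) A"
    using emeasure_vimage_add_eq_of_permuted[OF meas perm A] ab cd
    by (metis emeasure_distr A meas)
  then show "emeasure (distr M N a) A = emeasure (distr M N c) A"
    by (metis add_strict_mono linorder_neq_iff)
qed simp

theorem theorem2p4:
  fixes M :: "'a measure" and X Y :: "'a \<Rightarrow> real"
  assumes "prob_space M"
    and "X \<in> borel_measurable M" and "Y \<in> borel_measurable M"
    and rev_exch: "distr M (borel \<Otimes>\<^sub>M borel) (\<lambda>\<omega>. (X \<omega>, Y \<omega>))
                 = distr M (borel \<Otimes>\<^sub>M borel) (\<lambda>\<omega>. (- Y \<omega>, - X \<omega>))"
  shows "distr M borel (\<lambda>\<omega>. \<bar>max (X \<omega>) (Y \<omega>)\<bar>) = distr M borel (\<lambda>\<omega>. \<bar>min (X \<omega>) (Y \<omega>)\<bar>)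
       \<and> distr M borel (\<lambda>\<omega>. \<bar>min (X \<omega>) (Y \<omega>)\<bar>) = distr M borel (\<lambda>\<omega>. \<bar>X \<omega>\<bar>)
       \<and> distr M borel (\<lambda>\<omega>. \<bar>X \<omega>\<bar>) = distr M borel (\<lambda>\<omega>. \<bar>Y \<omega>\<bar>)"
proof -
  have transport: "distr M borel (\<lambda>\<omega>. h (X \<omega>, Y \<omega>)) = distr M borel (\<lambda>\<omega>. h (- Y \<omega>, - X \<omega>))"
    if "h \<in> borel_measurable (borel \<Otimes>\<^sub>M borel)" for h :: "real \<times> real \<Rightarrow> real"
    using distr_comp_eq[OF rev_exch _ _ that] assms(2,3) by measurable
  have max_min: "distr M borel (\<lambda>\<omega>. \<bar>max (X \<omega>) (Y \<omega>)\<bar>) = distr M borel (\<lambda>\<omega>. \<bar>min (X \<omega>) (Y \<omega>)\<bar>)"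
  proof -
    have "\<bar>max (- Y \<omega>) (- X \<omega>)\<bar> = \<bar>min (X \<omega>) (Y \<omega>)\<bar>" for \<omega>
      by (simp add: max_def min_def)
    with transport[of "\<lambda>p. \<bar>max (fst p) (snd p)\<bar>"] show ?thesis by simp
  qed
  have X_Y: "distr M borel (\<lambda>\<omega>. \<bar>X \<omega>\<bar>) = distr M borel (\<lambda>\<omega>. \<bar>Y \<omega>\<bar>)"
    using transport[of "\<lambda>p. \<bar>fst p\<bar>"] by simp
  have "distr M borel (\<lambda>\<omega>. \<bar>min (X \<omega>) (Y \<omega>)\<bar>) = distr M borel (\<lambda>\<omega>. \<bar>X \<omega>\<bar>)"
  proof (rule distr_eq_of_permuted[OF _ _ _ _ _ max_min[symmetric] X_Y])
    show "\<And>\<omega>. (\<bar>min (X \<omega>) (Y \<omega>)\<bar> = \<bar>X \<omega>\<bar> \<and> \<bar>max (X \<omega>) (Y \<omega>)\<bar> = \<bar>Y \<omega>\<bar>)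
             \<or> (\<bar>min (X \<omega>) (Y \<omega>)\<bar> = \<bar>Y \<omega>\<bar> \<and> \<bar>max (X \<omega>) (Y \<omega>)\<bar> = \<bar>X \<omega>\<bar>)"
      by (simp add: max_def min_def)
  qed (use assms(2,3) in measurable)
  with max_min X_Y show ?thesis by simp
qed

end
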